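(* Let $A\in\mathbb{R}^{l\times m}$ and $B\in\mathbb{R}^{n\times m}$, and consider the parametrized system $A\,(c\circ x^B)=0$ with parameters $c\in\mathbb{R}^m_{>0}$. Assume $\ker A\cap\mathbb{R}^m_{>0}\neq\emptyset$, that the coefficient polytope $P$ is one-dimensional ($\dim P=1$), and that the monomial dependency is one ($d=1$). Let $\omega$, $\tilde b\in\mathbb{R}^\omega$ be as defined in the context. If $$\sum_{i'=1}^{i}\tilde b_{i'}\ge 0\ \text{ for all } i=1,\dots,\omega-1 \quad(\text{or } \textstyle\sum_{i'=1}^{i}\tilde b_{i'}\le 0 \text{ for all } i=1,\dots,\omega-1)$$ and $\tilde b_1\cdot\tilde b_\omega<0$, then $|Y_c|=1$ for all $c\in\mathbb{R}^m_{>0}$.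
   Context: Notation: for $x\in\mathbb{R}^n_{>0}$ and $y\in\mathbb{R}^n$, $x^y=\prod_{i=1}^n x_i^{y_i}$; for a matrix $B=(b^1,\dots,b^m)\in\mathbb{R}^{n\times m}$, $x^B\in\mathbb{R}^m_{>0}$ is the vector with entries $x^{b^j}$; $\circ$ denotes the componentwise product, and $(\cdot)^{-1}$ applied to a positive vector is componentwise. $1_m\in\mathbb{R}^m$ is the all-ones vector. (One class setting.) The coefficient polytope is $P=\{y\in\ker A\cap\mathbb{R}^m_{>0} : 1_m\cdot y=1\}$. The monomial dependency subspace is $D=\ker\begin{pmatrix}B\\ 1_m^{\mathsf T}\end{pmatrix}\subseteq\mathbb{R}^m$ and the monomial dependency is $d=\dim D$. The solution set on the coefficient polytope is $Y_c=\{y\in P : y^z=c^z \text{ for all } z\in D\}$. When $\dim P=1$, the closure $\overline P=\{y\in\ker A\cap\mathbb{R}^m_{\ge0}: 1_m\cdot y=1\}$ is a line segment with two endpoints $y^1,y^2$; set $q=(y^1-y^2)\circ(y^1+y^2)^{-1}\in\mathbb{R}^m$, and assume (after reordering the indices $\{1,\dots,m\}$) that $1=q_1\ge q_2\ge\cdots\ge q_m=-1$. Let $I_1,\dots,I_\omega\subseteq\{1,\dots,m\}$ be the $\omega$ equivalence classes of indices with equal (consecutive) components of $q$, ordered so that the common value $\tilde q_i$ of $q$ on $I_i$ is strictly decreasing in $i$. When $d=1$, let $b\in\mathbb{R}^m$ span $D$, and define the lumped vector $\tilde b\in\mathbb{R}^\omega$ by $\tilde b_i=\sum_{i'\in I_i}b_{i'}$.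 *)

theory Defs
  imports "HOL-Analysis.Analysis"
begin

text \<open>Vectors in R^m are modelled as real^'m for a finite index type 'm (m = CARD('m)).
  A is an l x m matrix (real^'m^'l), B is an n x m matrix (real^'m^'n).\<close>

definition kerA :: "real^'m^'l \<Rightarrow> (real^'m) set" where
  "kerA A = {y. A *v y = 0}"

definition pos_vec :: "real^'m \<Rightarrow> bool" where
  "pos_vec y \<longleftrightarrow> (\<forall>j. y $ j > 0)"

definition nonneg_vec :: "real^'m \<Rightarrow> bool" where
  "nonneg_vec y \<longleftrightarrow> (\<forall>j. y $ j \<ge> 0)"

definition coeff_polytope :: "real^'m^'l \<Rightarrow> (real^'m) set" where
  "coeff_polytope A = {y. y \<in> kerA A \<and> pos_vec y \<and> (\<Sum>j\<in>UNIV. y $ j) = 1}"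

definition coeff_polytope_closure :: "real^'m^'l \<Rightarrow> (real^'m) set" where
  "coeff_polytope_closure A = {y. y \<in> kerA A \<and> nonneg_vec y \<and> (\<Sum>j\<in>UNIV. y $ j) = 1}"

definition mon_dep_space :: "real^'m^'n \<Rightarrow> (real^'m) set" where
  "mon_dep_space B = {z. B *v z = 0 \<and> (\<Sum>j\<in>UNIV. z $ j) = 0}"

definition vpow :: "real^'m \<Rightarrow> real^'m \<Rightarrow> real" where
  "vpow x y = (\<Prod>j\<in>UNIV. (x $ j) powr (y $ j))"

definition Ysol :: "real^'m^'l \<Rightarrow> real^'m^'n \<Rightarrow> real^'m \<Rightarrow> (real^'m) set" where
  "Ysol A B c = {y \<in> coeff_polytope A. \<forall>z\<in>mon_dep_space B. vpow y z = vpow c z}"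

definition qvec :: "real^'m \<Rightarrow> real^'m \<Rightarrow> real^'m" where
  "qvec y1 y2 = (\<chi> j. (y1 $ j - y2 $ j) / (y1 $ j + y2 $ j))"

definition n_classes :: "real^'m \<Rightarrow> nat" where
  "n_classes q = card (range (\<lambda>j. q $ j))"

text \<open>Common value of q on the i-th class (0-based), strictly decreasing in i.\<close>
definition class_val :: "real^'m \<Rightarrow> nat \<Rightarrow> real" where
  "class_val q i = rev (sorted_list_of_set (range (\<lambda>j. q $ j))) ! i"

definition eq_class :: "real^'m \<Rightarrow> nat \<Rightarrow> 'm set" where
  "eq_class q i = {j. q $ j = class_val q i}"

definition lumped :: "real^'m \<Rightarrow> real^'m \<Rightarrow> nat \<Rightarrow> real" where
  "lumped q b i = (\<Sum>j\<in>eq_class q i. b $ j)"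

end

theory Submission
  imports Defs "HOL-Real_Asymp.Real_Asymp"
begin

text \<open>
  The polytope P is the open segment between y1 and y2, parametrised by s in (-1,1) through
  y(s)_j = (y1_j + y2_j)/2 * (1 + s q_j). Since D is spanned by b, a point y(s) lies in Y_c iff
  ln y(s)^b = ln c^b, i.e. iff the log profile G(s) = \<Sum>_j b_j ln (1 + s q_j) equals a
  constant depending on c. For s < s' the difference G(s') - G(s) is \<Sum>_j b_j \<phi>(q_j) with
  \<phi> strictly increasing; grouping the indices into the classes of q and summing by parts,
  nonnegative partial sums of the lumped vector, a positive first entry and total sum zero make
  this positive, so G is strictly increasing. As q = 1 on the first class and q = -1 on the last,
  the signs of the first and last lumped entries force G to tend to -\<infinity> at -1 and to +\<infinity>
  at 1, so G takes every value exactly once. The case of nonpositive partial sums follows by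
  replacing b with -b.
\<close>

lemma sum_by_parts_atMost:
  fixes a c :: "nat \<Rightarrow> 'a::comm_ring"
  shows "(\<Sum>k\<le>n. c k * a k)
         = (\<Sum>k<n. (\<Sum>i\<le>k. a i) * (c k - c (Suc k))) + (\<Sum>i\<le>n. a i) * c n"
  by (induction n) (simp_all add: algebra_simps)

lemma weighted_sum_pos_if_partial_sums_nonneg:
  fixes a c :: "nat \<Rightarrow> 'a::linordered_idom"
  assumes "0 < n"
    and c_decr: "\<And>k. k < n \<Longrightarrow> c (Suc k) < c k"
    and partial: "\<And>k. k < n \<Longrightarrow> 0 \<le> (\<Sum>i\<le>k. a i)"
    and "0 < a 0" and total: "(\<Sum>i\<le>n. a i) = 0"
  shows "0 < (\<Sum>k\<le>n. c k * a k)"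
proof -
  have "0 < (\<Sum>k<n. (\<Sum>i\<le>k. a i) * (c k - c (Suc k)))"
  proof (rule sum_pos2[where i = 0])
    show "0 < (\<Sum>i\<le>0. a i) * (c 0 - c (Suc 0))"
      using assms c_decr[of 0] by simp
  qed (use assms in \<open>auto intro!: mult_nonneg_nonneg simp: less_imp_le\<close>)
  then show ?thesis
    by (simp add: sum_by_parts_atMost total)
qed

lemma class_val_strict_decreasing:
  assumes "i < k" "k < n_classes q"
  shows "class_val q k < class_val q i"
proof -
  have "sorted_wrt (>) (rev (sorted_list_of_set (range (($) q))))"
    unfolding sorted_wrt_rev using strict_sorted_list_of_set by simp
  then show ?thesis
    using assms sorted_wrt_nth_less by (fastforce simp: class_val_def n_classes_def)
qed

lemma class_val_in_range:
  assumes "k < n_classes q"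
  shows "class_val q k \<in> range (($) q)"
proof -
  have "rev (sorted_list_of_set (range (($) q))) ! k \<in> set (rev (sorted_list_of_set (range (($) q))))"
    using assms by (intro nth_mem) (simp add: n_classes_def)
  then show ?thesis
    by (simp add: class_val_def)
qed

lemma range_eq_class_vals: "range (($) q) = class_val q ` {..<n_classes q}"
proof
  show "class_val q ` {..<n_classes q} \<subseteq> range (($) q)"
    using class_val_in_range by blast
  show "range (($) q) \<subseteq> class_val q ` {..<n_classes q}"
  proof
    fix v
    assume "v \<in> range (($) q)"
    then have "v \<in> set (rev (sorted_list_of_set (range (($) q))))"
      by simp
    then obtain k where "k < n_classes q" "rev (sorted_list_of_set (range (($) q))) ! k = v"
      unfolding in_set_conv_nth n_classes_def by auto
    then show "v \<in> class_val q ` {..<n_classes q}"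
      by (auto simp: class_val_def)
  qed
qed

lemma class_val_first:
  assumes "v \<in> range (($) q)"
  shows "v \<le> class_val q 0"
proof -
  obtain k where "k < n_classes q" "v = class_val q k"
    using assms by (auto simp: range_eq_class_vals)
  then show ?thesis
    using class_val_strict_decreasing[of 0 k q] by (cases "k = 0") auto
qed

lemma class_val_last:
  assumes "v \<in> range (($) q)"
  shows "class_val q (n_classes q - 1) \<le> v"
proof -
  obtain k where "k < n_classes q" "v = class_val q k"
    using assms by (auto simp: range_eq_class_vals)
  then show ?thesis
    using class_val_strict_decreasing[of k "n_classes q - 1" q]
    by (cases "k = n_classes q - 1") (auto simp: less_imp_le)
qed

lemma sum_by_classes:
  fixes q b :: "real^'m" and \<phi> :: "real \<Rightarrow> real"
  shows "(\<Sum>j\<in>UNIV. b$j * \<phi> (q$j)) = (\<Sum>k<n_classes q. \<phi> (class_val q k) * lumped q b k)"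
proof -
  have inj: "inj_on (class_val q) {..<n_classes q}"
    by (metis class_val_strict_decreasing inj_onI lessThan_iff less_irrefl nat_neq_iff)
  have "(\<Sum>j\<in>UNIV. b$j * \<phi> (q$j)) = (\<Sum>v\<in>range (($) q). \<Sum>j\<in>{j\<in>UNIV. q$j = v}. b$j * \<phi> (q$j))"
    by (rule sum.group[symmetric]) auto
  also have "\<dots> = (\<Sum>v\<in>range (($) q). \<phi> v * (\<Sum>j\<in>{j. q$j = v}. b$j))"
    by (auto simp: sum_distrib_left mult.commute intro!: sum.cong)
  also have "\<dots> = (\<Sum>k<n_classes q. \<phi> (class_val q k) * lumped q b k)"
    by (simp add: range_eq_class_vals sum.reindex[OF inj] lumped_def eq_class_def)
  finally show ?thesis .
qed

lemma one_plus_mult_pos: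
  assumes "\<bar>s::real\<bar> < 1" "\<bar>u\<bar> \<le> 1"
  shows "0 < 1 + s * u"
proof -
  have "\<bar>s * u\<bar> \<le> \<bar>s\<bar>"
    using assms by (simp add: abs_mult mult_left_le)
  then show ?thesis
    using assms by linarith
qed

lemma ln_ratio_strict_mono:
  fixes s s' u v :: real
  assumes "\<bar>s\<bar> < 1" "\<bar>s'\<bar> < 1" "s < s'" "\<bar>u\<bar> \<le> 1" "\<bar>v\<bar> \<le> 1" "u < v"
  shows "ln (1 + s' * u) - ln (1 + s * u) < ln (1 + s' * v) - ln (1 + s * v)"
proof -
  have pos: "0 < 1 + s' * u" "0 < 1 + s * u" "0 < 1 + s' * v" "0 < 1 + s * v"
    using assms by (auto intro!: one_plus_mult_pos)
  have "(1 + s' * v) * (1 + s * u) - (1 + s' * u) * (1 + s * v) = (s' - s) * (v - u)"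
    by (simp add: algebra_simps)
  also have "\<dots> > 0"
    using assms by simp
  finally have "ln ((1 + s' * u) * (1 + s * v)) < ln ((1 + s' * v) * (1 + s * u))"
    using pos by simp
  then show ?thesis
    using pos by (simp add: ln_mult)
qed

definition log_profile :: "real^'m \<Rightarrow> real^'m \<Rightarrow> real \<Rightarrow> real" where
  "log_profile q b s = (\<Sum>j\<in>UNIV. b$j * ln (1 + s * q$j))"

lemma log_profile_strict_mono:
  fixes q b :: "real^'m"
  assumes q_bound: "\<And>j. \<bar>q$j\<bar> \<le> 1"
    and classes: "2 \<le> n_classes q"
    and partial: "\<forall>i < n_classes q - 1. 0 \<le> (\<Sum>i'\<le>i. lumped q b i')"
    and first: "0 < lumped q b 0"
    and total: "(\<Sum>j\<in>UNIV. b$j) = 0"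
  shows "strict_mono_on {-1<..<1} (log_profile q b)"
proof (rule strict_mono_onI)
  fix s s' :: real
  assume "s \<in> {-1<..<1}" "s' \<in> {-1<..<1}" "s < s'"
  then have ss: "\<bar>s\<bar> < 1" "\<bar>s'\<bar> < 1" "s < s'"
    by auto
  define \<phi> where "\<phi> v = ln (1 + s' * v) - ln (1 + s * v)" for v
  define n where "n = n_classes q - 1"
  have n: "n_classes q = Suc n" "0 < n"
    using classes by (simp_all add: n_def)
  have class_bound: "\<bar>class_val q i\<bar> \<le> 1" if "i \<le> n" for i
    using class_val_in_range[of i q] that n q_bound by auto
  have "0 < (\<Sum>k\<le>n. \<phi> (class_val q k) * lumped q b k)"
  proof (rule weighted_sum_pos_if_partial_sums_nonneg)
    fix k
    assume "k < n"
    then have "\<bar>class_val q (Suc k)\<bar> \<le> 1" "\<bar>class_val q k\<bar> \<le> 1"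
      by (simp_all add: class_bound)
    moreover have "class_val q (Suc k) < class_val q k"
      using \<open>k < n\<close> n by (intro class_val_strict_decreasing) auto
    ultimately show "\<phi> (class_val q (Suc k)) < \<phi> (class_val q k)"
      unfolding \<phi>_def by (rule ln_ratio_strict_mono[OF ss])
  next
    show "(\<Sum>i\<le>n. lumped q b i) = 0"
      using sum_by_classes[of b "\<lambda>_. 1" q] total by (simp add: n lessThan_Suc_atMost)
  qed (use n(2) partial first in \<open>simp_all add: n_def\<close>)
  also have "\<dots> = (\<Sum>j\<in>UNIV. b$j * \<phi> (q$j))"
    using sum_by_classes[of b \<phi> q] by (simp only: n lessThan_Suc_atMost)
  also have "\<dots> = log_profile q b s' - log_profile q b s"
    by (simp add: log_profile_def \<phi>_def sum_subtractf[symmetric] right_diff_distrib)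
  finally show "log_profile q b s < log_profile q b s'"
    by simp
qed

lemma log_profile_continuous:
  assumes "\<And>j. \<bar>q$j\<bar> \<le> 1"
  shows "continuous_on {-1<..<1} (log_profile q b)"
  unfolding log_profile_def
proof (intro continuous_intros ballI)
  fix j and s :: real
  assume "s \<in> {-1<..<1}"
  then have "0 < 1 + s * q$j"
    using assms one_plus_mult_pos by (simp add: abs_less_iff)
  then show "1 + s * q$j \<noteq> 0"
    by simp
qed

lemma log_profile_split:
  "log_profile q b s = (\<Sum>j | q$j = v. b$j) * ln (1 + s * v) + (\<Sum>j | q$j \<noteq> v. b$j * ln (1 + s * q$j))"
proof -
  have "log_profile q b s = (\<Sum>j\<in>UNIV \<inter> {j. q$j = v}. b$j * ln (1 + s * q$j))
      + (\<Sum>j\<in>UNIV - {j. q$j = v}. b$j * ln (1 + s * q$j))"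
    unfolding log_profile_def by (rule sum.Int_Diff) simp
  also have "UNIV - {j. q$j = v} = {j. q$j \<noteq> v}"
    by auto
  finally show ?thesis
    by (simp add: sum_distrib_right)
qed

lemma log_profile_at_left_one:
  assumes "\<And>j. \<bar>q$j\<bar> \<le> 1" "(\<Sum>j | q$j = -1. b$j) < 0"
  shows "filterlim (log_profile q b) at_top (at_left 1)"
proof -
  have rest: "((\<lambda>s. \<Sum>j | q$j \<noteq> -1. b$j * ln (1 + s * q$j))
      \<longlongrightarrow> (\<Sum>j | q$j \<noteq> -1. b$j * ln (1 + 1 * q$j))) (at_left 1)"
    using assms(1) by (intro tendsto_intros) (force simp: abs_le_iff)
  have "filterlim (\<lambda>s::real. ln (1 - s)) at_bot (at_left 1)"
    by real_asymp
  then have "filterlim (\<lambda>s. (\<Sum>j | q$j = -1. b$j) * ln (1 - s)) at_top (at_left 1)"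
    by (simp add: filterlim_tendsto_neg_mult_at_top_iff[OF tendsto_const assms(2)])
  from filterlim_tendsto_add_at_top[OF rest this] show ?thesis
    by (simp add: log_profile_split[of q b _ "-1", abs_def] add.commute)
qed

lemma log_profile_at_right_minus_one:
  assumes "\<And>j. \<bar>q$j\<bar> \<le> 1" "0 < (\<Sum>j | q$j = 1. b$j)"
  shows "filterlim (log_profile q b) at_bot (at_right (-1))"
proof -
  have rest: "((\<lambda>s. \<Sum>j | q$j \<noteq> 1. b$j * ln (1 + s * q$j))
      \<longlongrightarrow> (\<Sum>j | q$j \<noteq> 1. b$j * ln (1 + -1 * q$j))) (at_right (-1))"
    using assms(1) by (intro tendsto_intros) (force simp: abs_le_iff)
  have "filterlim (\<lambda>s::real. ln (1 + s)) at_bot (at_right (-1))"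
    by real_asymp
  then have "filterlim (\<lambda>s. (\<Sum>j | q$j = 1. b$j) * ln (1 + s)) at_bot (at_right (-1))"
    by (simp add: filterlim_tendsto_pos_mult_at_bot_iff[OF tendsto_const assms(2)])
  from filterlim_tendsto_add_at_bot_iff[OF rest] this show ?thesis
    by (simp add: log_profile_split[of q b _ 1, abs_def] add.commute)
qed

lemma strict_mono_on_unbounded_ex1:
  fixes f :: "real \<Rightarrow> real"
  assumes "continuous_on {a<..<b} f" "strict_mono_on {a<..<b} f"
    and "filterlim f at_bot (at_right a)" "filterlim f at_top (at_left b)" "a < b"
  shows "\<exists>!s. s \<in> {a<..<b} \<and> f s = t"
proof -
  obtain m where m: "a < m" "m < b"
    using \<open>a < b\<close> dense by blast
  have "\<forall>\<^sub>F s in at_right a. f s \<le> t \<and> s \<in> {a<..<m}"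
    using assms(3) eventually_at_right_real[OF m(1)]
    by (auto simp: filterlim_at_bot intro: eventually_conj)
  then obtain s1 where s1: "f s1 \<le> t" "a < s1" "s1 < m"
    using eventually_happens'[of "at_right a"] by auto
  have "\<forall>\<^sub>F s in at_left b. t \<le> f s \<and> s \<in> {m<..<b}"
    using assms(4) eventually_at_left_real[OF m(2)]
    by (auto simp: filterlim_at_top intro: eventually_conj)
  then obtain s2 where s2: "t \<le> f s2" "m < s2" "s2 < b"
    using eventually_happens'[of "at_left b"] by auto
  have "continuous_on {s1..s2} f"
    using assms(1) by (rule continuous_on_subset) (use s1 s2 in auto)
  then obtain s where "s1 \<le> s" "s \<le> s2" "f s = t"
    using IVT'[of f s1 t s2] s1 s2 by auto
  moreover have "inj_on f {a<..<b}"
    using assms(2) by (rule strict_mono_on_imp_inj_on)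
  ultimately show ?thesis
    using s1 s2 by (intro ex1I[of _ s]) (auto dest: inj_onD)
qed

lemma mem_coeff_polytope_closure:
  "y \<in> coeff_polytope_closure A \<longleftrightarrow> A *v y = 0 \<and> (\<forall>j. 0 \<le> y$j) \<and> (\<Sum>j\<in>UNIV. y$j) = 1"
  by (simp add: coeff_polytope_closure_def kerA_def nonneg_vec_def)

lemma mem_coeff_polytope:
  "y \<in> coeff_polytope A \<longleftrightarrow> y \<in> coeff_polytope_closure A \<and> (\<forall>j. 0 < y$j)"
  by (auto simp: coeff_polytope_def mem_coeff_polytope_closure kerA_def pos_vec_def less_imp_le)

lemma coeff_polytope_closure_segment_endpoint_has_zero:
  assumes closure: "coeff_polytope_closure A = closed_segment y1 y2" and "y1 \<noteq> y2"
  shows "\<exists>j. y2$j = 0"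
proof (rule ccontr)
  assume "\<not> (\<exists>j. y2$j = 0)"
  moreover have y1: "y1 \<in> coeff_polytope_closure A" and y2: "y2 \<in> coeff_polytope_closure A"
    using closure by auto
  ultimately have y2_pos: "\<forall>j. 0 < y2$j"
    by (auto simp: mem_coeff_polytope_closure less_le)
  define \<epsilon> where "\<epsilon> = Min (range (($) y2))"
  have "0 < \<epsilon>" "\<And>j. \<epsilon> \<le> y2$j"
    using y2_pos by (simp_all add: \<epsilon>_def)
  have y1_le_1: "y1$j \<le> 1" for j
    using member_le_sum[of j UNIV "($) y1"] y1 by (simp add: mem_coeff_polytope_closure)
  \<comment> \<open>Moving from y1 past y2 stays in the closure, so y2 is not an endpoint.\<close>
  define z where "z = (1 + \<epsilon>) *\<^sub>R y2 - \<epsilon> *\<^sub>R y1"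
  have "z \<in> coeff_polytope_closure A"
    unfolding mem_coeff_polytope_closure
  proof (intro conjI allI)
    show "A *v z = 0"
      using y1 y2 by (simp add: z_def mem_coeff_polytope_closure
          matrix_vector_mult_diff_distrib matrix_vector_mult_scaleR)
    show "0 \<le> z$j" for j
    proof -
      have "\<epsilon> * y1$j \<le> \<epsilon>"
        using mult_left_mono[OF y1_le_1[of j]] \<open>0 < \<epsilon>\<close> by simp
      moreover have "0 \<le> \<epsilon> * y2$j"
        using \<open>0 < \<epsilon>\<close> y2_pos by (simp add: less_imp_le)
      ultimately show ?thesis
        using \<open>\<epsilon> \<le> y2$j\<close> by (simp add: z_def algebra_simps)
    qed
    show "(\<Sum>j\<in>UNIV. z$j) = 1"
      using y1 y2 by (simp add: z_def sum_subtractf sum_distrib_left[symmetric] mem_coeff_polytope_closure)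
  qed
  then obtain u where u: "0 \<le> u" "u \<le> 1" "z = (1 - u) *\<^sub>R y1 + u *\<^sub>R y2"
    using closure unfolding closed_segment_def by auto
  then have "(1 + \<epsilon> - u) *\<^sub>R (y2 - y1) = 0"
    by (simp add: z_def algebra_simps)
  then show False
    using u \<open>0 < \<epsilon>\<close> \<open>y1 \<noteq> y2\<close> by simp
qed

lemma coeff_polytope_closure_segment_endpoints_have_zero:
  assumes "coeff_polytope_closure A = closed_segment y1 y2" "y1 \<noteq> y2"
  obtains j1 j2 where "y1$j1 = 0" "y2$j2 = 0"
  using coeff_polytope_closure_segment_endpoint_has_zero[OF assms]
    coeff_polytope_closure_segment_endpoint_has_zero[of A y2 y1] assms
  by (metis closed_segment_commute)

lemma coeff_polytope_closure_segment_endpoints_nonneg: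
  assumes "coeff_polytope_closure A = closed_segment y1 y2"
  shows "0 \<le> y1$j" "0 \<le> y2$j"
proof -
  have "y1 \<in> coeff_polytope_closure A" "y2 \<in> coeff_polytope_closure A"
    using assms by auto
  then show "0 \<le> y1$j" "0 \<le> y2$j"
    by (simp_all add: mem_coeff_polytope_closure)
qed

lemma coeff_polytope_closure_segment_endpoints_sum_pos:
  assumes "\<exists>y\<in>kerA A. pos_vec y" "coeff_polytope_closure A = closed_segment y1 y2"
  shows "0 < y1$j + y2$j"
proof -
  obtain y where y: "A *v y = 0" "\<forall>j. 0 < y$j"
    using assms(1) by (auto simp: kerA_def pos_vec_def)
  define \<sigma> where "\<sigma> = (\<Sum>j\<in>UNIV. y$j)"
  have "0 < \<sigma>"
    using y(2) by (simp add: \<sigma>_def sum_pos)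
  then have "(1 / \<sigma>) *\<^sub>R y \<in> coeff_polytope_closure A"
    using y by (auto simp: mem_coeff_polytope_closure matrix_vector_mult_scaleR \<sigma>_def
        sum_divide_distrib[symmetric] less_imp_le)
  then obtain u where u: "0 \<le> u" "u \<le> 1" "(1 / \<sigma>) *\<^sub>R y = (1 - u) *\<^sub>R y1 + u *\<^sub>R y2"
    using assms(2) unfolding closed_segment_def by auto
  have "0 < y$j / \<sigma>"
    using y(2) \<open>0 < \<sigma>\<close> by simp
  then have "0 < (1 - u) * y1$j + u * y2$j"
    using u(3)[THEN arg_cong[where f = "\<lambda>x. x$j"]] by simp
  moreover have "0 \<le> y1$j" "0 \<le> y2$j"
    using coeff_polytope_closure_segment_endpoints_nonneg[OF assms(2)] by auto
  ultimately show ?thesis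
    using u mult_left_le[of u "y2$j"] mult_left_le[of "1 - u" "y1$j"]
      mult.commute[of u "y2$j"] mult.commute[of "1 - u" "y1$j"] by linarith
qed

lemma qvec_abs_le_one: "0 \<le> y1$j \<Longrightarrow> 0 \<le> y2$j \<Longrightarrow> \<bar>qvec y1 y2 $ j\<bar> \<le> 1"
  using add_nonneg_nonneg[of "y1$j" "y2$j"]
  by (auto simp: qvec_def divide_le_eq_1 abs_le_iff)

lemma class_val_extremes:
  fixes q :: "real^'m"
  assumes "\<And>j. \<bar>q$j\<bar> \<le> 1" "q$j1 = 1" "q$j2 = -1"
  shows "class_val q 0 = 1" "class_val q (n_classes q - 1) = -1" "2 \<le> n_classes q"
proof -
  have "{1, -1} \<subseteq> range (($) q)"
    using assms(2,3) by (metis empty_subsetI insert_subset rangeI)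
  then have "card {1::real, -1} \<le> n_classes q"
    unfolding n_classes_def by (intro card_mono) auto
  then show "2 \<le> n_classes q"
    by simp
  then obtain i k where "class_val q 0 = q$i" "class_val q (n_classes q - 1) = q$k"
    using class_val_in_range[of 0 q] class_val_in_range[of "n_classes q - 1" q] by fastforce
  moreover have "1 \<le> class_val q 0" "class_val q (n_classes q - 1) \<le> -1"
    using class_val_first[of 1 q] class_val_last[of "-1" q] assms(2,3) by (metis rangeI)+
  ultimately show "class_val q 0 = 1" "class_val q (n_classes q - 1) = -1"
    using assms(1)[of i] assms(1)[of k] by (simp_all add: abs_le_iff)
qed

definition segment_point :: "real^'m \<Rightarrow> real^'m \<Rightarrow> real \<Rightarrow> real^'m" where
  "segment_point y1 y2 s = ((1 + s) / 2) *\<^sub>R y1 + ((1 - s) / 2) *\<^sub>R y2"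

lemma segment_point_component:
  assumes "y1$j + y2$j \<noteq> 0"
  shows "segment_point y1 y2 s $ j = (y1$j + y2$j) / 2 * (1 + s * qvec y1 y2 $ j)"
  using assms by (simp add: segment_point_def qvec_def field_simps)

lemma segment_point_component_pos:
  assumes "0 \<le> y1$j" "0 \<le> y2$j" "0 < y1$j + y2$j" "\<bar>s\<bar> < 1"
  shows "0 < segment_point y1 y2 s $ j"
proof -
  have "0 < 1 + s * qvec y1 y2 $ j"
    using assms one_plus_mult_pos qvec_abs_le_one by blast
  then show ?thesis
    unfolding segment_point_component[OF less_imp_neq[OF assms(3), symmetric]]
    using assms(3) by (intro mult_pos_pos) simp_all
qed

lemma coeff_polytope_eq_segment_points:
  assumes nonempty: "\<exists>y\<in>kerA A. pos_vec y"
    and closure: "coeff_polytope_closure A = closed_segment y1 y2" and "y1 \<noteq> y2"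
  shows "coeff_polytope A = segment_point y1 y2 ` {-1<..<1}"
proof
  show "coeff_polytope A \<subseteq> segment_point y1 y2 ` {-1<..<1}"
  proof
    fix y
    assume y: "y \<in> coeff_polytope A"
    then obtain u where u: "0 \<le> u" "u \<le> 1" "y = (1 - u) *\<^sub>R y1 + u *\<^sub>R y2"
      using closure unfolding mem_coeff_polytope closed_segment_def by auto
    obtain j1 j2 where "y1$j1 = 0" "y2$j2 = 0"
      using coeff_polytope_closure_segment_endpoints_have_zero[OF closure \<open>y1 \<noteq> y2\<close>] .
    moreover have "0 < y$j1" "0 < y$j2"
      using y by (simp_all add: mem_coeff_polytope)
    ultimately have "u \<noteq> 0" "u \<noteq> 1"
      using u by auto
    moreover have "y = segment_point y1 y2 (1 - 2 * u)"
      using u by (simp add: segment_point_def)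
    ultimately show "y \<in> segment_point y1 y2 ` {-1<..<1}"
      using u by (intro image_eqI[of _ _ "1 - 2 * u"]) auto
  qed
  show "segment_point y1 y2 ` {-1<..<1} \<subseteq> coeff_polytope A"
  proof clarify
    fix s :: real
    assume s: "s \<in> {-1<..<1}"
    then have "segment_point y1 y2 s \<in> closed_segment y1 y2"
      unfolding closed_segment_def segment_point_def
      by (intro CollectI exI[of _ "(1 - s) / 2"]) (auto simp: field_simps)
    moreover have "0 < segment_point y1 y2 s $ j" for j
      using s coeff_polytope_closure_segment_endpoints_nonneg[OF closure]
        coeff_polytope_closure_segment_endpoints_sum_pos[OF nonempty closure]
      by (intro segment_point_component_pos) auto
    ultimately show "segment_point y1 y2 s \<in> coeff_polytope A"
      using closure by (simp add: mem_coeff_polytope)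
  qed
qed

lemma vpow_pos:
  assumes "pos_vec y"
  shows "0 < vpow y z"
proof -
  have "y$j \<noteq> 0" for j
    using assms unfolding pos_vec_def by (metis less_irrefl)
  then show ?thesis
    unfolding vpow_def by (intro prod_pos) simp
qed

lemma ln_vpow:
  assumes "pos_vec y"
  shows "ln (vpow y z) = (\<Sum>j\<in>UNIV. z$j * ln (y$j))"
proof -
  have "y$j \<noteq> 0" for j
    using assms unfolding pos_vec_def by (metis less_irrefl)
  then show ?thesis
    unfolding vpow_def by (simp add: ln_prod)
qed

lemma vpow_scaleR: "pos_vec y \<Longrightarrow> vpow y (t *\<^sub>R z) = vpow y z powr t"
  unfolding vpow_def pos_vec_def by (simp add: prod_powr_distrib powr_powr mult.commute less_imp_le)

lemma Ysol_eq_if_span: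
  assumes "span {b} = mon_dep_space B" "pos_vec c"
  shows "Ysol A B c = {y \<in> coeff_polytope A. ln (vpow y b) = ln (vpow c b)}"
proof -
  have b_in: "b \<in> mon_dep_space B"
    using assms(1) span_base[of b "{b}"] by simp
  have "y \<in> Ysol A B c \<longleftrightarrow> y \<in> coeff_polytope A \<and> ln (vpow y b) = ln (vpow c b)" for y
  proof
    assume "y \<in> Ysol A B c"
    then show "y \<in> coeff_polytope A \<and> ln (vpow y b) = ln (vpow c b)"
      using b_in by (simp add: Ysol_def)
  next
    assume y: "y \<in> coeff_polytope A \<and> ln (vpow y b) = ln (vpow c b)"
    then have "pos_vec y"
      by (simp add: coeff_polytope_def)
    then have "vpow y b = vpow c b"
      using y vpow_pos[of y b] vpow_pos[OF assms(2), of b] by simp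
    have "vpow y z = vpow c z" if z: "z \<in> mon_dep_space B" for z
    proof -
      obtain t where "z = t *\<^sub>R b"
        using z assms(1) span_singleton[of b] by auto
      then show ?thesis
        using \<open>vpow y b = vpow c b\<close> vpow_scaleR[OF \<open>pos_vec y\<close>] vpow_scaleR[OF assms(2)] by simp
    qed
    then show "y \<in> Ysol A B c"
      using y by (simp add: Ysol_def)
  qed
  then show ?thesis
    by blast
qed

lemma ln_vpow_segment_point:
  assumes "\<And>j. 0 \<le> y1$j" "\<And>j. 0 \<le> y2$j" "\<And>j. 0 < y1$j + y2$j" "\<bar>s\<bar> < 1"
  shows "ln (vpow (segment_point y1 y2 s) b)
         = (\<Sum>j\<in>UNIV. b$j * ln ((y1$j + y2$j) / 2)) + log_profile (qvec y1 y2) b s"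
proof -
  have "ln (segment_point y1 y2 s $ j) = ln ((y1$j + y2$j) / 2) + ln (1 + s * qvec y1 y2 $ j)" for j
  proof -
    have "0 < 1 + s * qvec y1 y2 $ j"
      using assms one_plus_mult_pos qvec_abs_le_one by blast
    then show ?thesis
      unfolding segment_point_component[OF less_imp_neq[OF assms(3), symmetric]]
      using assms(3)[of j] by (subst ln_mult) auto
  qed
  moreover have "pos_vec (segment_point y1 y2 s)"
    unfolding pos_vec_def using assms by (blast intro: segment_point_component_pos)
  ultimately show ?thesis
    by (simp add: ln_vpow log_profile_def distrib_left sum.distrib)
qed

lemma coeff_polytope_closure_segment_class_extremes:
  fixes A :: "real^'m^'l" and y1 y2 :: "real^'m"
  defines "q \<equiv> qvec y1 y2"
  assumes nonempty: "\<exists>y\<in>kerA A. pos_vec y"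
    and closure: "coeff_polytope_closure A = closed_segment y1 y2" and "y1 \<noteq> y2"
  shows "class_val q 0 = 1" "class_val q (n_classes q - 1) = -1" "2 \<le> n_classes q"
proof -
  obtain j1 j2 where "y1$j1 = 0" "y2$j2 = 0"
    using coeff_polytope_closure_segment_endpoints_have_zero[OF closure \<open>y1 \<noteq> y2\<close>] .
  then have "q$j2 = 1" "q$j1 = -1"
    using coeff_polytope_closure_segment_endpoints_sum_pos[OF nonempty closure, of j1]
      coeff_polytope_closure_segment_endpoints_sum_pos[OF nonempty closure, of j2]
    by (simp_all add: q_def qvec_def)
  moreover have "\<bar>q$j\<bar> \<le> 1" for j
    unfolding q_def using coeff_polytope_closure_segment_endpoints_nonneg[OF closure]
    by (rule qvec_abs_le_one)
  ultimately show "class_val q 0 = 1" "class_val q (n_classes q - 1) = -1" "2 \<le> n_classes q"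
    using class_val_extremes by blast+
qed

lemma card_Ysol_eq_1_if_partial_sums_nonneg:
  fixes A :: "real^'m^'l" and B :: "real^'m^'n" and y1 y2 b c :: "real^'m"
  defines "q \<equiv> qvec y1 y2"
  assumes nonempty: "\<exists>y\<in>kerA A. pos_vec y"
    and closure: "coeff_polytope_closure A = closed_segment y1 y2" and "y1 \<noteq> y2"
    and bspan: "span {b} = mon_dep_space B"
    and partial: "\<forall>i < n_classes q - 1. 0 \<le> (\<Sum>i'\<le>i. lumped q b i')"
    and ends: "lumped q b 0 * lumped q b (n_classes q - 1) < 0"
    and "pos_vec c"
  shows "card (Ysol A B c) = 1"
proof -
  note nonneg = coeff_polytope_closure_segment_endpoints_nonneg[OF closure]
  note sum_pos = coeff_polytope_closure_segment_endpoints_sum_pos[OF nonempty closure]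
  note extremes = coeff_polytope_closure_segment_class_extremes[OF nonempty closure \<open>y1 \<noteq> y2\<close>,
      folded q_def]
  have q_bound: "\<bar>q$j\<bar> \<le> 1" for j
    unfolding q_def using nonneg by (rule qvec_abs_le_one)
  have "0 \<le> lumped q b 0"
    using partial extremes(3) by fastforce
  then have "0 < lumped q b 0" "lumped q b (n_classes q - 1) < 0"
    using ends by (auto simp: mult_less_0_iff)
  then have first: "0 < (\<Sum>j | q$j = 1. b$j)" and last: "(\<Sum>j | q$j = -1. b$j) < 0"
    unfolding lumped_def eq_class_def extremes(1,2) .
  have "(\<Sum>j\<in>UNIV. b$j) = 0"
    using bspan span_base[of b "{b}"] by (simp add: mon_dep_space_def)
  with \<open>0 < lumped q b 0\<close> have "strict_mono_on {-1<..<1} (log_profile q b)"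
    by (intro log_profile_strict_mono[OF q_bound extremes(3) partial])
  define T where "T = ln (vpow c b) - (\<Sum>j\<in>UNIV. b$j * ln ((y1$j + y2$j) / 2))"
  have "\<exists>!s. s \<in> {-1<..<1} \<and> log_profile q b s = T"
    by (rule strict_mono_on_unbounded_ex1[OF log_profile_continuous[OF q_bound] \<open>strict_mono_on _ _\<close>
          log_profile_at_right_minus_one[OF q_bound first] log_profile_at_left_one[OF q_bound last]]) simp
  then obtain s0 where s0: "{s \<in> {-1<..<1}. log_profile q b s = T} = {s0}"
    by blast
  have "Ysol A B c = segment_point y1 y2 ` {s \<in> {-1<..<1}. log_profile q b s = T}"
    using ln_vpow_segment_point[OF nonneg sum_pos]
    by (auto simp: Ysol_eq_if_span[OF bspan \<open>pos_vec c\<close>]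
        coeff_polytope_eq_segment_points[OF nonempty closure \<open>y1 \<noteq> y2\<close>] q_def T_def abs_less_iff)
  then show ?thesis
    unfolding s0 by simp
qed

lemma lumped_uminus: "lumped q (- b) i = - lumped q b i"
  by (simp add: lumped_def sum_negf)

lemma span_singleton_uminus:
  fixes b :: "'a::real_vector"
  shows "span {- b} = span {b}"
proof -
  have "span {- x} \<subseteq> span {x}" for x :: 'a
    by (simp add: span_minimal span_neg span_base)
  from this[of b] this[of "- b"] show ?thesis
    by simp
qed

theorem theorem2:
  fixes A :: "real^'m^'l" and B :: "real^'m^'n"
    and y1 y2 b :: "real^'m"
  assumes nonempty: "\<exists>y\<in>kerA A. pos_vec y"
    and dimP: "aff_dim (coeff_polytope A) = 1"
    and endpoints: "coeff_polytope_closure A = closed_segment y1 y2" "y1 \<noteq> y2"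
    and d1: "dim (mon_dep_space B) = 1"
    and bspan: "span {b} = mon_dep_space B"
    and sign: "(\<forall>i < n_classes (qvec y1 y2) - 1.
                  (\<Sum>i'\<le>i. lumped (qvec y1 y2) b i') \<ge> 0)
             \<or> (\<forall>i < n_classes (qvec y1 y2) - 1.
                  (\<Sum>i'\<le>i. lumped (qvec y1 y2) b i') \<le> 0)"
    and ends: "lumped (qvec y1 y2) b 0 * lumped (qvec y1 y2) b (n_classes (qvec y1 y2) - 1) < 0"
  shows "\<forall>c. pos_vec c \<longrightarrow> card (Ysol A B c) = 1"
proof (intro allI impI)
  fix c :: "real^'m"
  assume "pos_vec c"
  from sign show "card (Ysol A B c) = 1"
  proof
    assume "\<forall>i < n_classes (qvec y1 y2) - 1. (\<Sum>i'\<le>i. lumped (qvec y1 y2) b i') \<ge> 0"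
    then show ?thesis
      using card_Ysol_eq_1_if_partial_sums_nonneg nonempty endpoints bspan ends \<open>pos_vec c\<close>
      by blast
  next
    assume "\<forall>i < n_classes (qvec y1 y2) - 1. (\<Sum>i'\<le>i. lumped (qvec y1 y2) b i') \<le> 0"
    then have "\<forall>i < n_classes (qvec y1 y2) - 1. 0 \<le> (\<Sum>i'\<le>i. lumped (qvec y1 y2) (- b) i')"
      by (simp add: lumped_uminus sum_negf)
    moreover have "lumped (qvec y1 y2) (- b) 0 * lumped (qvec y1 y2) (- b) (n_classes (qvec y1 y2) - 1) < 0"
      using ends by (simp add: lumped_uminus)
    moreover have "span {- b} = mon_dep_space B"
      using bspan by (simp add: span_singleton_uminus)
    ultimately show ?thesis
      using card_Ysol_eq_1_if_partial_sums_nonneg nonempty endpoints \<open>pos_vec c\<close> by blast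
  qed
qed

end
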